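(* For every positive integer $n$, there exists a set $P$ of $n$ distinct points in the Euclidean plane $\mathbb{R}^2$ and $\lfloor n/4\rfloor$ distinct positive real numbers $d_1,\dots,d_{\lfloor n/4\rfloor}$ such that for each $j$, the number of unordered pairs $\{p,q\}\subset P$ with $p\neq q$ and $\|p-q\|=d_j$ is at least $n+1$.
   Context: A distance $d$ "occurs $t$ times" in a finite point set $P\subset\mathbb{R}^2$ if exactly $t$ unordered pairs of distinct points of $P$ are at Euclidean distance $d$. When $\lfloor n/4\rfloor=0$ the statement is vacuous. *)

theory Defs
  imports "HOL-Analysis.Analysis"
begin

definition occurrences :: "(real^2) set \<Rightarrow> real \<Rightarrow> nat" where
  "occurrences P d = card {{p, q} | p q. p \<in> P \<and> q \<in> P \<and> p \<noteq> q \<and> dist p q = d}"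

end

theory Submission
  imports Defs
begin

text \<open>
  Let \<open>N = \<lfloor>n/2\<rfloor> + 1\<close>, let \<open>A\<close> be the regular \<open>N\<close>-gon of \<open>N\<close>-th roots of unity and
  \<open>B = c - A\<close> its point reflection with \<open>c = 1 + \<omega>\<close>, where \<open>\<omega> = \<zeta>\<^sub>N\<close> for even \<open>n\<close> and
  \<open>\<omega> = 1\<close> for odd \<open>n\<close>. The unit circles around \<open>0\<close> and \<open>c\<close> meet only in \<open>1\<close> and \<open>\<omega>\<close>,
  so \<open>A \<inter> B = {1, \<omega>}\<close> and \<open>|A \<union> B| = n\<close>. For \<open>0 < 2m < N\<close> each polygon has \<open>N\<close> chords of
  length \<open>|1 - \<zeta>\<^sub>N\<^sup>m|\<close>, and the two polygons share at most the chord joining \<open>1\<close> and \<open>\<omega>\<close>, which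
  exists only for even \<open>n\<close>; either way \<open>A \<union> B\<close> has at least \<open>n + 1\<close> such chords. The lengths
  for \<open>m = 1, \<dots>, \<lfloor>n/4\<rfloor>\<close> are distinct because \<open>2m \<le> N\<close> keeps the angles \<open>2\<pi>m/N\<close> in \<open>[0, \<pi>]\<close>.
\<close>

definition dist_pairs :: "'a::metric_space set \<Rightarrow> real \<Rightarrow> 'a set set" where
  "dist_pairs P d = {{p, q} | p q. p \<in> P \<and> q \<in> P \<and> p \<noteq> q \<and> dist p q = d}"

lemma occurrences_eq_card_dist_pairs: "occurrences P d = card (dist_pairs P d)"
  by (simp add: occurrences_def dist_pairs_def)

lemma doubleton_in_dist_pairs:
  "p \<in> P \<Longrightarrow> q \<in> P \<Longrightarrow> p \<noteq> q \<Longrightarrow> dist p q = d \<Longrightarrow> {p, q} \<in> dist_pairs P d"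
  unfolding dist_pairs_def by blast

lemma dist_pairs_subset_Pow: "dist_pairs P d \<subseteq> Pow P"
  by (auto simp: dist_pairs_def)

lemma finite_dist_pairs: "finite P \<Longrightarrow> finite (dist_pairs P d)"
  using dist_pairs_subset_Pow by (rule finite_subset) simp

lemma dist_pairs_mono: "P \<subseteq> Q \<Longrightarrow> dist_pairs P d \<subseteq> dist_pairs Q d"
  by (auto simp: dist_pairs_def)

lemma dist_pairs_Int: "dist_pairs P d \<inter> dist_pairs Q d = dist_pairs (P \<inter> Q) d"
proof (intro equalityI subsetI)
  fix s assume s: "s \<in> dist_pairs P d \<inter> dist_pairs Q d"
  then have "s \<subseteq> Q"
    using dist_pairs_subset_Pow by blast
  with s show "s \<in> dist_pairs (P \<inter> Q) d"
    by (auto simp: dist_pairs_def)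
qed (use dist_pairs_mono[of "P \<inter> Q" P d] dist_pairs_mono[of "P \<inter> Q" Q d] in blast)

lemma card_dist_pairs_Un_Int:
  assumes "finite P" "finite Q"
  shows "card (dist_pairs P d) + card (dist_pairs Q d)
           \<le> card (dist_pairs (P \<union> Q) d) + card (dist_pairs (P \<inter> Q) d)"
proof -
  have "dist_pairs P d \<union> dist_pairs Q d \<subseteq> dist_pairs (P \<union> Q) d"
    using dist_pairs_mono[of P "P \<union> Q" d] dist_pairs_mono[of Q "P \<union> Q" d] by blast
  then have "card (dist_pairs P d \<union> dist_pairs Q d) \<le> card (dist_pairs (P \<union> Q) d)"
    using assms by (intro card_mono finite_dist_pairs) simp_all
  moreover have "card (dist_pairs P d) + card (dist_pairs Q d)
          = card (dist_pairs P d \<union> dist_pairs Q d) + card (dist_pairs (P \<inter> Q) d)"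
    using card_Un_Int[OF finite_dist_pairs[OF assms(1), of d] finite_dist_pairs[OF assms(2), of d]]
    unfolding dist_pairs_Int .
  ultimately show ?thesis
    by linarith
qed

lemma card_dist_pairs_isometric_image:
  fixes f :: "'a::metric_space \<Rightarrow> 'b::metric_space"
  assumes isom: "\<And>x y. x \<in> P \<Longrightarrow> y \<in> P \<Longrightarrow> dist (f x) (f y) = dist x y"
  shows "card (dist_pairs (f ` P) d) = card (dist_pairs P d)"
proof -
  have inj: "inj_on f P"
  proof (rule inj_onI)
    fix x y assume "x \<in> P" "y \<in> P" "f x = f y"
    then have "dist x y = 0"
      using isom[of x y] by simp
    then show "x = y"
      by simp
  qed
  have "dist_pairs (f ` P) d = image f ` dist_pairs P d"
  proof (intro equalityI subsetI)
    fix s assume "s \<in> dist_pairs (f ` P) d"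
    then obtain p q where pq: "p \<in> P" "q \<in> P" "f p \<noteq> f q" "dist (f p) (f q) = d" "s = f ` {p, q}"
      unfolding dist_pairs_def by auto
    then have "{p, q} \<in> dist_pairs P d"
      using isom[of p q] unfolding dist_pairs_def by auto
    with pq show "s \<in> image f ` dist_pairs P d"
      by blast
  next
    fix s assume "s \<in> image f ` dist_pairs P d"
    then obtain p q where pq: "p \<in> P" "q \<in> P" "p \<noteq> q" "dist p q = d" "s = {f p, f q}"
      unfolding dist_pairs_def by auto
    then have "f p \<noteq> f q"
      using inj_on_eq_iff[OF inj] by simp
    with pq isom[of p q] show "s \<in> dist_pairs (f ` P) d"
      by (simp add: doubleton_in_dist_pairs)
  qed
  moreover have "inj_on (image f) (dist_pairs P d)"
    using inj_on_subset[OF inj_on_image_Pow[OF inj] dist_pairs_subset_Pow] .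
  ultimately show ?thesis
    by (simp add: card_image)
qed

lemma card_dist_pairs_le_choose_2:
  assumes "finite P"
  shows "card (dist_pairs P d) \<le> card P choose 2"
proof -
  have "dist_pairs P d \<subseteq> {S. S \<subseteq> P \<and> card S = 2}"
    by (auto simp: dist_pairs_def)
  then have "card (dist_pairs P d) \<le> card {S. S \<subseteq> P \<and> card S = 2}"
    using assms by (intro card_mono) auto
  then show ?thesis
    using n_subsets[OF assms] by simp
qed

definition zeta :: "nat \<Rightarrow> complex" where
  "zeta N = cis (2 * pi / N)"

lemma zeta_power: "zeta N ^ k = cis (2 * pi * k / N)"
  by (simp add: zeta_def Complex.DeMoivre mult.commute)

lemma norm_zeta_power [simp]: "cmod (zeta N ^ k) = 1"
  by (simp add: zeta_power)

lemma zeta_power_eq_iff: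
  assumes "N > 0"
  shows "zeta N ^ j = zeta N ^ k \<longleftrightarrow> j mod N = k mod N"
proof -
  have "zeta N ^ k = exp (2 * of_real pi * \<i> * of_nat k / of_nat N)" for k
    by (simp add: zeta_power cis_conv_exp field_simps)
  then show ?thesis
    using complex_root_unity_eq[of N j k] assms by simp
qed

lemma zeta_power_eq_1_iff:
  assumes "N > 0"
  shows "zeta N ^ k = 1 \<longleftrightarrow> N dvd k"
  using zeta_power_eq_iff[OF assms, of k 0] by (simp add: dvd_eq_mod_eq_0)

lemma zeta_power_add_eq_iff: "zeta N ^ (i + k) = zeta N ^ i \<longleftrightarrow> zeta N ^ k = 1"
proof -
  have "zeta N ^ i \<noteq> 0"
    using norm_zeta_power[of N i] by (metis norm_zero zero_neq_one)
  then show ?thesis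
    unfolding power_add mult_cancel_left2 by blast
qed

definition polygon :: "nat \<Rightarrow> complex set" where
  "polygon N = (\<lambda>k. zeta N ^ k) ` {..<N}"

lemma finite_polygon [simp]: "finite (polygon N)"
  by (simp add: polygon_def)

lemma norm_polygon: "z \<in> polygon N \<Longrightarrow> cmod z = 1"
  by (auto simp: polygon_def)

lemma zeta_power_in_polygon:
  assumes "N > 0"
  shows "zeta N ^ k \<in> polygon N"
  unfolding polygon_def
  using assms zeta_power_eq_iff[OF assms, of k "k mod N"] by (intro image_eqI[of _ _ "k mod N"]) auto

lemma card_polygon: "card (polygon N) = N"
  unfolding polygon_def by (subst card_image) (auto intro!: inj_onI simp: zeta_power_eq_iff)

lemma zeta_power_ne_1:
  assumes "0 < k" "k < N"
  shows "zeta N ^ k \<noteq> 1"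
  using assms zeta_power_eq_1_iff[of N k] by (auto dest: dvd_imp_le)

lemma chord_pos:
  assumes "0 < m" "m < N"
  shows "cmod (1 - zeta N ^ m) > 0"
  using zeta_power_ne_1[OF assms] by simp

lemma chord_squared: "(cmod (1 - zeta N ^ k))\<^sup>2 = 2 - 2 * cos (2 * pi * k / N)"
proof -
  have "(cmod (1 - zeta N ^ k))\<^sup>2 = (1 - cos (2 * pi * k / N))\<^sup>2 + (sin (2 * pi * k / N))\<^sup>2"
    by (simp add: zeta_power cmod_power2)
  then show ?thesis
    using sin_cos_squared_add[of "2 * pi * k / N"] by (simp add: power2_diff)
qed

lemma inj_on_chord: "inj_on (\<lambda>m. cmod (1 - zeta N ^ m)) {..N div 2}"
proof (rule inj_onI)
  fix a b assume a: "a \<in> {..N div 2}" and b: "b \<in> {..N div 2}"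
    and eq: "cmod (1 - zeta N ^ a) = cmod (1 - zeta N ^ b)"
  have angle_le_pi: "2 * pi * k / N \<le> pi" if "k \<in> {..N div 2}" for k
  proof (cases "N = 0")
    case False
    have "2 * real k \<le> real N"
      using that by auto
    then show ?thesis
      using False by (simp add: field_simps)
  qed simp
  have cos_eq: "cos (2 * pi * a / N) = cos (2 * pi * b / N)"
    using arg_cong[OF eq, of "\<lambda>x. x\<^sup>2"] unfolding chord_squared by simp
  have "2 * pi * a / N = 2 * pi * b / N"
    by (rule cos_inj_pi[OF _ angle_le_pi[OF a] _ angle_le_pi[OF b] cos_eq]) simp_all
  then show "a = b"
    using a b by (cases "N = 0") auto
qed

lemma card_dist_pairs_polygon:
  assumes "0 < m" "2 * m < N"
  shows "N \<le> card (dist_pairs (polygon N) (cmod (1 - zeta N ^ m)))"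
proof -
  have N: "N > 0"
    using assms by simp
  define chord_at where "chord_at i = {zeta N ^ i, zeta N ^ (i + m)}" for i
  have "inj_on chord_at {..<N}"
  proof (rule inj_onI)
    fix i j assume i: "i \<in> {..<N}" and j: "j \<in> {..<N}" and "chord_at i = chord_at j"
    then consider "zeta N ^ i = zeta N ^ j"
      | "zeta N ^ i = zeta N ^ (j + m)" "zeta N ^ (i + m) = zeta N ^ j"
      unfolding chord_at_def doubleton_eq_iff by blast
    then show "i = j"
    proof cases
      case 1
      then show ?thesis
        using i j zeta_power_eq_iff[OF N, of i j] by simp
    next
      case 2
      have "zeta N ^ (j + 2 * m) = zeta N ^ (j + m) * zeta N ^ m"
        by (simp add: power_add mult_2)
      also have "\<dots> = zeta N ^ j"
        using 2 by (simp add: power_add)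
      finally have "zeta N ^ (2 * m) = 1"
        unfolding zeta_power_add_eq_iff .
      then show ?thesis
        using zeta_power_ne_1[of "2 * m"] assms by simp
    qed
  qed
  moreover have "chord_at ` {..<N} \<subseteq> dist_pairs (polygon N) (cmod (1 - zeta N ^ m))"
  proof clarify
    fix i
    have distinct: "zeta N ^ (i + m) \<noteq> zeta N ^ i"
      using zeta_power_add_eq_iff zeta_power_ne_1[of m] assms by simp
    have "zeta N ^ i - zeta N ^ (i + m) = zeta N ^ i * (1 - zeta N ^ m)"
      by (simp add: power_add algebra_simps)
    then have "dist (zeta N ^ i) (zeta N ^ (i + m)) = cmod (1 - zeta N ^ m)"
      by (simp add: dist_norm norm_mult)
    with distinct show "chord_at i \<in> dist_pairs (polygon N) (cmod (1 - zeta N ^ m))"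
      unfolding chord_at_def by (intro doubleton_in_dist_pairs zeta_power_in_polygon N) auto
  qed
  ultimately show ?thesis
    using card_inj_on_le[OF _ _ finite_dist_pairs[OF finite_polygon]] by (metis card_lessThan)
qed

lemma unit_circle_Int_unit_circle:
  fixes z om :: complex
  assumes om: "cmod om = 1" "om \<noteq> -1" and z: "cmod z = 1" "cmod (1 + om - z) = 1"
  shows "z = 1 \<or> z = om"
proof -
  have om_conj: "om * cnj om = 1"
    using om(1) complex_norm_square[of om] by simp
  have z_conj: "z * cnj z = 1"
    using z(1) complex_norm_square[of z] by simp
  have "(1 + om - z) * cnj (1 + om - z) = 1"
    using z(2) complex_norm_square[of "1 + om - z"] by simp
  then have shifted_conj: "(1 + om - z) * (1 + cnj om - cnj z) = 1"
    by simp
  \<comment> \<open>A combination of the three circle equations \<open>w * cnj w = 1\<close> that factors as a product.\<close>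
  have "(1 + om) * ((z - 1) * (z - om))
          = - (z * om * ((1 + om - z) * (1 + cnj om - cnj z) - 1))
            + (1 + om - z) * (z * (om * cnj om - 1) - om * (z * cnj z - 1))"
    by (simp add: algebra_simps)
  then have "(1 + om) * ((z - 1) * (z - om)) = 0"
    unfolding om_conj z_conj shifted_conj by simp
  moreover have "1 + om \<noteq> 0"
    using om(2) by (metis add.commute add_eq_0_iff)
  ultimately show ?thesis
    by auto
qed

definition polygon_pair :: "nat \<Rightarrow> complex \<Rightarrow> complex set" where
  "polygon_pair N om = polygon N \<union> (\<lambda>z. 1 + om - z) ` polygon N"

lemma finite_polygon_pair [simp]: "finite (polygon_pair N om)"
  by (simp add: polygon_pair_def)

lemma polygon_Int_reflected_polygon:
  assumes om: "om \<in> polygon N" "om \<noteq> -1"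
  shows "polygon N \<inter> (\<lambda>z. 1 + om - z) ` polygon N = {1, om}"
proof
  show "polygon N \<inter> (\<lambda>z. 1 + om - z) ` polygon N \<subseteq> {1, om}"
  proof
    fix z assume z: "z \<in> polygon N \<inter> (\<lambda>z. 1 + om - z) ` polygon N"
    then have "cmod (1 + om - z) = 1"
      by (auto simp: norm_polygon)
    with z om show "z \<in> {1, om}"
      using unit_circle_Int_unit_circle[of om z] norm_polygon by blast
  qed
  have "N > 0"
    using om(1) by (auto simp: polygon_def)
  then have "1 \<in> polygon N"
    using zeta_power_in_polygon[of N 0] by simp
  with om(1) show "{1, om} \<subseteq> polygon N \<inter> (\<lambda>z. 1 + om - z) ` polygon N"
    by (auto intro: rev_image_eqI)
qed

lemma card_polygon_pair:
  assumes "om \<in> polygon N" "om \<noteq> -1"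
  shows "card (polygon_pair N om) + card {1, om} = 2 * N"
proof -
  have "card ((\<lambda>z. 1 + om - z) ` polygon N) = N"
    by (simp add: card_image card_polygon)
  then show ?thesis
    using card_Un_Int[of "polygon N" "(\<lambda>z. 1 + om - z) ` polygon N"]
    by (simp add: polygon_pair_def polygon_Int_reflected_polygon[OF assms] card_polygon)
qed

lemma card_dist_pairs_polygon_pair:
  assumes "om \<in> polygon N" "om \<noteq> -1" and "0 < m" "2 * m < N"
  shows "2 * N \<le> card (dist_pairs (polygon_pair N om) (cmod (1 - zeta N ^ m))) + (card {1, om} choose 2)"
proof -
  let ?d = "cmod (1 - zeta N ^ m)"
  have "card (dist_pairs ((\<lambda>z. 1 + om - z) ` polygon N) ?d) = card (dist_pairs (polygon N) ?d)"
    by (rule card_dist_pairs_isometric_image) (simp add: dist_norm norm_minus_commute)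
  then have "2 * N \<le> card (dist_pairs (polygon N) ?d) + card (dist_pairs ((\<lambda>z. 1 + om - z) ` polygon N) ?d)"
    using card_dist_pairs_polygon[OF assms(3,4)] by simp
  also have "\<dots> \<le> card (dist_pairs (polygon_pair N om) ?d) + card (dist_pairs {1, om} ?d)"
    using card_dist_pairs_Un_Int[of "polygon N" "(\<lambda>z. 1 + om - z) ` polygon N" ?d]
    by (simp add: polygon_pair_def polygon_Int_reflected_polygon[OF assms(1,2)])
  also have "\<dots> \<le> card (dist_pairs (polygon_pair N om) ?d) + (card {1, om} choose 2)"
    using card_dist_pairs_le_choose_2[of "{1, om}" ?d] by simp
  finally show ?thesis .
qed

definition vec_of_complex :: "complex \<Rightarrow> real^2" where
  "vec_of_complex z = vector [Re z, Im z]"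

lemma dist_vec_of_complex: "dist (vec_of_complex z) (vec_of_complex w) = dist z w"
proof -
  have "dist (vec_of_complex z) (vec_of_complex w) = sqrt ((Re z - Re w)\<^sup>2 + (Im z - Im w)\<^sup>2)"
    unfolding dist_norm norm_vec_def L2_set_def vec_of_complex_def by (simp add: sum_2)
  then show ?thesis
    by (simp add: dist_norm cmod_def)
qed

lemma card_vec_of_complex_image: "card (vec_of_complex ` S) = card S"
proof (rule card_image)
  show "inj_on vec_of_complex S"
    by (rule inj_onI) (metis dist_vec_of_complex dist_eq_0_iff)
qed

lemma occurrences_vec_of_complex_image: "occurrences (vec_of_complex ` S) d = card (dist_pairs S d)"
  unfolding occurrences_eq_card_dist_pairs
  by (rule card_dist_pairs_isometric_image) (rule dist_vec_of_complex)

lemma polygon_pair_for_size: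
  assumes "4 \<le> n"
  defines "N \<equiv> n div 2 + 1"
  defines "om \<equiv> if even n then zeta N else 1"
  shows card_polygon_pair_for_size: "card (polygon_pair N om) = n"
    and card_dist_pairs_polygon_pair_for_size:
      "0 < m \<Longrightarrow> 2 * m < N \<Longrightarrow> n + 1 \<le> card (dist_pairs (polygon_pair N om) (cmod (1 - zeta N ^ m)))"
proof -
  have N: "N \<ge> 3"
    using assms(1) by (simp add: N_def)
  have om: "om \<in> polygon N" "om \<noteq> -1"
    using zeta_power_in_polygon[of N 1] zeta_power_in_polygon[of N 0] zeta_power_ne_1[of 2 N] N
    by (auto simp: om_def power2_eq_square)
  have card_1_om: "card {1, om} = (if even n then 2 else 1)"
    using zeta_power_ne_1[of 1 N] N by (simp add: om_def)
  show "card (polygon_pair N om) = n"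
    using card_polygon_pair[OF om] card_1_om by (simp add: N_def split: if_splits; presburger)
  show "n + 1 \<le> card (dist_pairs (polygon_pair N om) (cmod (1 - zeta N ^ m)))"
    if "0 < m" "2 * m < N"
    using card_dist_pairs_polygon_pair[OF om that] card_1_om
    by (simp add: N_def choose_two split: if_splits)
qed

theorem theorem1:
  fixes n :: nat
  assumes "n > 0"
  shows "\<exists>(P :: (real^2) set) (d :: nat \<Rightarrow> real).
           finite P \<and> card P = n \<and> inj_on d {..<n div 4} \<and>
           (\<forall>j<n div 4. d j > 0 \<and> occurrences P (d j) \<ge> n + 1)"
proof (cases "n < 4")
  case True
  then show ?thesis
    by (intro exI[of _ "vec_of_complex ` polygon n"]) (simp add: card_vec_of_complex_image card_polygon)
next
  case False
  define N where "N = n div 2 + 1"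
  define om where "om = (if even n then zeta N else 1)"
  define d where "d j = cmod (1 - zeta N ^ (j + 1))" for j
  have j: "j + 1 \<in> {..N div 2}" "2 * (j + 1) < N" if "j < n div 4" for j
    using that by (auto simp: N_def)
  have card: "card (polygon_pair N om) = n"
    using card_polygon_pair_for_size[of n] False unfolding N_def om_def by simp
  have "inj_on d {..<n div 4}"
  proof (rule inj_onI)
    fix i k assume "i \<in> {..<n div 4}" "k \<in> {..<n div 4}" "d i = d k"
    then show "i = k"
      using inj_onD[OF inj_on_chord, of N "i + 1" "k + 1"] j(1) unfolding d_def by simp
  qed
  moreover have "d j > 0" if "j < n div 4" for j
    using chord_pos[of "j + 1" N] j[OF that] by (simp add: d_def)
  moreover have "occurrences (vec_of_complex ` polygon_pair N om) (d j) \<ge> n + 1"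
    if "j < n div 4" for j
    using card_dist_pairs_polygon_pair_for_size[of n "j + 1"] j[OF that] False
    unfolding d_def N_def om_def occurrences_vec_of_complex_image by simp
  ultimately show ?thesis
    by (intro exI[of _ "vec_of_complex ` polygon_pair N om"] exI[of _ d])
      (simp add: card_vec_of_complex_image card)
qed

end
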